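(* Let $1\le p<\infty$, $q=p(p-1)^{-1}$, $\beta\in\mathbb{R}$, let $r\in\mathbb{N}$, and let $\omega$ be a function of the modulus of continuity type. Suppose there is a constant $C$ such that for all integers $n\ge0$, $$\left\{\int_{0}^{\frac{\pi}{r(n+1)}}\left(\frac{\omega(t)}{t\sin^{\beta}\frac{rt}{2}}\right)^{q}dt\right\}^{1/q}\le C(n+1)^{\beta+1/p}\,\omega\!\left(\frac{\pi}{n+1}\right).$$ Then for every $m\in\{0,1,\dots,[r/2]\}$ there is a constant $C'$ such that for all $n\ge0$, $$\left\{\int_{\frac{2m\pi}{r}}^{\frac{2m\pi}{r}+\frac{\pi}{r(n+1)}}\left(\frac{\omega(t)}{t\left|\sin\frac{rt}{2}\right|^{\beta}}\right)^{q}dt\right\}^{1/q}\le C'(n+1)^{\beta+1/p}\,\omega\!\left(\frac{\pi}{n+1}\right).$$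
   Context: A function of the modulus of continuity type is a nondecreasing continuous function $\omega$ on $[0,2\pi]$ with $\omega(0)=0$ and $\omega(\delta_1+\delta_2)\le\omega(\delta_1)+\omega(\delta_2)$ whenever $0\le\delta_1\le\delta_2\le\delta_1+\delta_2\le2\pi$. $[y]$ is the integer part of $y$. When $p=1$ (so $q=\infty$), $\{\int g^q\}^{1/q}$ is read as the essential supremum of $g$. *)

theory Defs
  imports "HOL-Analysis.Analysis" "HOL-Probability.Essential_Supremum"
begin

definition modulus_cont_type :: "(real \<Rightarrow> real) \<Rightarrow> bool" where
  "modulus_cont_type \<omega> \<longleftrightarrow>
     mono_on {0..2*pi} \<omega> \<and> continuous_on {0..2*pi} \<omega> \<and> \<omega> 0 = 0 \<and>
     (\<forall>d1 d2. 0 \<le> d1 \<and> d1 \<le> d2 \<and> d1 + d2 \<le> 2*pi \<longrightarrow> \<omega> (d1 + d2) \<le> \<omega> d1 + \<omega> d2)"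

text \<open>The quantity (int_a^b g^q)^(1/q) with q = p/(p-1) for a nonnegative g,
  valued in the extended reals (infinite if the integral diverges);
  for p = 1 (q = infinity) it is the essential supremum of g on [a,b].\<close>
definition Lq_norm_on :: "real \<Rightarrow> real \<Rightarrow> real \<Rightarrow> (real \<Rightarrow> real) \<Rightarrow> ereal" where
  "Lq_norm_on p a b g =
     (if p = 1 then esssup (restrict_space lborel {a..b}) (\<lambda>t. ereal (g t))
      else (let q = p / (p - 1);
                I = (\<integral>\<^sup>+ t. ennreal (g t powr q) * indicator {a..b} t \<partial>lborel)
            in if I = \<infinity> then \<infinity> else ereal (enn2real I powr (1 / q))))"

end

theory Submission
  imports Defs
begin

text \<open>Write a point of the shifted interval as \<open>t = 2m\<pi>/r + s\<close> with \<open>0 \<le> s \<le> \<pi>/r\<close>.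
  Then \<open>|sin (rt/2)| = sin (rs/2)\<close>, and subadditivity makes \<open>\<omega>(t)/t\<close> almost decreasing:
  \<open>\<omega>(t)/t \<le> 2\<omega>(s)/s\<close> for \<open>s \<le> t\<close>. So the integrand at \<open>t\<close> is at most twice the integrand
  of the hypothesis at \<open>s\<close>, and translation invariance of Lebesgue measure bounds the norm
  over the shifted interval by twice the norm over \<open>[0, \<pi>/(r(n+1))]\<close>.\<close>

lemma Lq_norm_on_cong:
  assumes "\<And>x. a \<le> x \<Longrightarrow> x \<le> b \<Longrightarrow> f x = g x"
  shows "Lq_norm_on p a b f = Lq_norm_on p a b g"
proof -
  let ?M = "restrict_space lborel {a..b}"
  have "(\<lambda>t. ereal (f t)) \<in> borel_measurable ?M \<longleftrightarrow> (\<lambda>t. ereal (g t)) \<in> borel_measurable ?M"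
    by (rule measurable_cong) (simp add: assms)
  moreover have "Limsup (ae_filter ?M) (\<lambda>t. ereal (f t)) = Limsup (ae_filter ?M) (\<lambda>t. ereal (g t))"
    by (rule Limsup_eq, rule AE_I2) (simp add: assms)
  ultimately have "esssup ?M (\<lambda>t. ereal (f t)) = esssup ?M (\<lambda>t. ereal (g t))"
    unfolding esssup_def by simp
  moreover have "(\<integral>\<^sup>+ t. ennreal (f t powr q) * indicator {a..b} t \<partial>lborel) =
                 (\<integral>\<^sup>+ t. ennreal (g t powr q) * indicator {a..b} t \<partial>lborel)" for q
    by (rule nn_integral_cong) (auto simp: assms indicator_def)
  ultimately show ?thesis
    unfolding Lq_norm_on_def by simp
qed

lemma esssup_translate_le:
  fixes f g :: "real \<Rightarrow> real"
  assumes [measurable]: "g \<in> borel_measurable borel" and "0 \<le> K"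
    and le: "\<And>s. 0 \<le> s \<Longrightarrow> s \<le> h \<Longrightarrow> g (t0 + s) \<le> K * f s"
  shows "esssup (restrict_space lborel {t0..t0+h}) (\<lambda>t. ereal (g t))
         \<le> ereal K * esssup (restrict_space lborel {0..h}) (\<lambda>t. ereal (f t))"
proof -
  define S where "S = esssup (restrict_space lborel {0..h}) (\<lambda>t. ereal (f t))"
  have "AE s in restrict_space lborel {0..h}. ereal (f s) \<le> S"
    unfolding S_def by (rule esssup_AE)
  then have "AE s in lborel. s \<in> {0..h} \<longrightarrow> ereal (f s) \<le> S"
    by (subst (asm) AE_restrict_space_iff) auto
  then have "AE s in distr lborel borel ((+) (-t0)). s \<in> {0..h} \<longrightarrow> ereal (f s) \<le> S"
    unfolding lborel_distr_plus .
  then have "AE t in lborel. -t0 + t \<in> {0..h} \<longrightarrow> ereal (f (-t0 + t)) \<le> S"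
    by (rule AE_distrD[rotated]) simp
  then have "AE t in lborel. t \<in> {t0..t0+h} \<longrightarrow> ereal (g t) \<le> ereal K * S"
  proof (rule eventually_mono, intro impI)
    fix t assume t: "t \<in> {t0..t0+h}" and "-t0 + t \<in> {0..h} \<longrightarrow> ereal (f (-t0 + t)) \<le> S"
    then have "ereal (f (-t0 + t)) \<le> S" by auto
    have "ereal (g t) \<le> ereal K * ereal (f (-t0 + t))"
      using le[of "-t0 + t"] t by auto
    also have "\<dots> \<le> ereal K * S"
      using \<open>ereal (f (-t0 + t)) \<le> S\<close> \<open>0 \<le> K\<close> by (intro ereal_mult_left_mono) auto
    finally show "ereal (g t) \<le> ereal K * S" .
  qed
  then show ?thesis
    unfolding S_def
    by (intro esssup_I) (auto simp: AE_restrict_space_iff intro: measurable_restrict_space1)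
qed

lemma nn_integral_powr_translate_le:
  fixes f g :: "real \<Rightarrow> real"
  assumes [measurable]: "f \<in> borel_measurable borel" and "0 < K" "0 \<le> q"
    and le: "\<And>s. 0 \<le> s \<Longrightarrow> s \<le> h \<Longrightarrow> 0 \<le> g (t0 + s) \<and> g (t0 + s) \<le> K * f s"
  shows "(\<integral>\<^sup>+ t. ennreal (g t powr q) * indicator {t0..t0+h} t \<partial>lborel)
         \<le> ennreal (K powr q) * (\<integral>\<^sup>+ t. ennreal (f t powr q) * indicator {0..h} t \<partial>lborel)"
proof -
  define F where "F = (\<lambda>s. ennreal (f s powr q) * indicator {0..h} s)"
  have [measurable]: "F \<in> borel_measurable borel" unfolding F_def by measurable
  have "(\<integral>\<^sup>+ t. ennreal (g t powr q) * indicator {t0..t0+h} t \<partial>lborel)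
        \<le> (\<integral>\<^sup>+ t. ennreal (K powr q) * F (t - t0) \<partial>lborel)"
  proof (rule nn_integral_mono)
    fix t
    show "ennreal (g t powr q) * indicator {t0..t0+h} t \<le> ennreal (K powr q) * F (t - t0)"
    proof (cases "t \<in> {t0..t0+h}")
      case True
      with le[of "t - t0"] have "0 \<le> g t" "g t \<le> K * f (t - t0)" by auto
      moreover from this have "0 \<le> f (t - t0)"
        using \<open>0 < K\<close> by (meson order.trans zero_le_mult_iff not_less)
      ultimately have "g t powr q \<le> K powr q * f (t - t0) powr q"
        using \<open>0 < K\<close> \<open>0 \<le> q\<close> by (metis less_imp_le powr_mono2 powr_mult)
      then show ?thesis
        using True \<open>0 \<le> f (t - t0)\<close> by (simp add: F_def ennreal_mult[symmetric] ennreal_leI)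
    qed (auto simp: indicator_def)
  qed
  also have "\<dots> = ennreal (K powr q) * (\<integral>\<^sup>+ t. F (t - t0) \<partial>lborel)"
    by (rule nn_integral_cmult) measurable
  also have "(\<integral>\<^sup>+ t. F (t - t0) \<partial>lborel) = (\<integral>\<^sup>+ s. F s \<partial>lborel)"
    using nn_integral_real_affine[of "\<lambda>t. F (t - t0)" 1 t0] by simp
  finally show ?thesis
    unfolding F_def .
qed

lemma Lq_norm_on_translate_le:
  fixes f g :: "real \<Rightarrow> real"
  assumes "1 \<le> p" "0 < K"
    and [measurable]: "f \<in> borel_measurable borel" "g \<in> borel_measurable borel"
    and le: "\<And>s. 0 \<le> s \<Longrightarrow> s \<le> h \<Longrightarrow> 0 \<le> g (t0 + s) \<and> g (t0 + s) \<le> K * f s"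
  shows "Lq_norm_on p t0 (t0 + h) g \<le> ereal K * Lq_norm_on p 0 h f"
proof (cases "p = 1")
  case True
  then show ?thesis
    using esssup_translate_le[of g K h t0 f] \<open>0 < K\<close> le by (simp add: Lq_norm_on_def)
next
  case False
  define q where "q = p / (p - 1)"
  have "0 < q" using False \<open>1 \<le> p\<close> by (simp add: q_def)
  define I where "I = (\<integral>\<^sup>+ t. ennreal (g t powr q) * indicator {t0..t0+h} t \<partial>lborel)"
  define J where "J = (\<integral>\<^sup>+ t. ennreal (f t powr q) * indicator {0..h} t \<partial>lborel)"
  have IJ: "I \<le> ennreal (K powr q) * J"
    unfolding I_def J_def
    by (rule nn_integral_powr_translate_le[OF assms(3) \<open>0 < K\<close> less_imp_le[OF \<open>0 < q\<close>] le])
  have norms: "Lq_norm_on p t0 (t0+h) g = (if I = \<infinity> then \<infinity> else ereal (enn2real I powr (1/q)))"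
              "Lq_norm_on p 0 h f = (if J = \<infinity> then \<infinity> else ereal (enn2real J powr (1/q)))"
    unfolding Lq_norm_on_def I_def J_def q_def Let_def using False by simp_all
  show ?thesis
  proof (cases "J = \<infinity>")
    case True
    then show ?thesis unfolding norms using \<open>0 < K\<close> by simp
  next
    case False
    then have "ennreal (K powr q) * J < \<infinity>"
      by (simp add: ennreal_mult_less_top top.not_eq_extremum)
    with IJ have "I < \<infinity>" by (rule le_less_trans)
    have "enn2real I \<le> enn2real (ennreal (K powr q) * J)"
      using IJ \<open>ennreal (K powr q) * J < \<infinity>\<close> by (intro enn2real_mono) auto
    also have "\<dots> = K powr q * enn2real J"
      by (simp add: enn2real_mult)
    finally have "enn2real I powr (1/q) \<le> (K powr q * enn2real J) powr (1/q)"
      using \<open>0 < q\<close> by (intro powr_mono2) auto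
    also have "\<dots> = K * enn2real J powr (1/q)"
      using \<open>0 < K\<close> \<open>0 < q\<close> by (simp add: powr_mult powr_powr)
    finally show ?thesis
      unfolding norms using False \<open>I < \<infinity>\<close> by simp
  qed
qed

lemma modulus_cont_type_mono:
  assumes "modulus_cont_type \<omega>" "0 \<le> x" "x \<le> y" "y \<le> 2*pi"
  shows "\<omega> x \<le> \<omega> y"
  using assms unfolding modulus_cont_type_def by (auto intro: mono_onD)

lemma modulus_cont_type_nonneg:
  assumes "modulus_cont_type \<omega>" "0 \<le> x" "x \<le> 2*pi"
  shows "0 \<le> \<omega> x"
  using modulus_cont_type_mono[OF assms(1) order_refl assms(2,3)] assms(1)
  by (simp add: modulus_cont_type_def)

lemma modulus_cont_type_subadditive:
  assumes "modulus_cont_type \<omega>" "0 \<le> x" "0 \<le> y" "x + y \<le> 2*pi"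
  shows "\<omega> (x + y) \<le> \<omega> x + \<omega> y"
  using assms unfolding modulus_cont_type_def by (metis add.commute linorder_le_cases)

lemma modulus_cont_type_mult_le:
  assumes "modulus_cont_type \<omega>" "0 \<le> s" "real k * s \<le> 2*pi"
  shows "\<omega> (real k * s) \<le> real k * \<omega> s"
  using assms(3)
proof (induction k)
  case 0
  then show ?case using assms(1) by (simp add: modulus_cont_type_def)
next
  case (Suc k)
  have "\<omega> (real (Suc k) * s) = \<omega> (s + real k * s)"
    by (simp add: algebra_simps)
  also have "\<dots> \<le> \<omega> s + \<omega> (real k * s)"
    using Suc.prems assms(2) by (intro modulus_cont_type_subadditive[OF assms(1)]) (auto simp: algebra_simps)
  also have "\<omega> (real k * s) \<le> real k * \<omega> s"
    using Suc.prems assms(2) by (intro Suc.IH) (simp add: algebra_simps)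
  finally show ?case by (simp add: algebra_simps)
qed

lemma modulus_cont_type_quasi_decreasing:
  assumes "modulus_cont_type \<omega>" "0 < s" "s \<le> t" "t \<le> 2*pi"
  shows "\<omega> t / t \<le> 2 * (\<omega> s / s)"
proof -
  define k where "k = nat \<lfloor>t / s\<rfloor>"
  have "1 \<le> t / s" using assms by simp
  then have k: "1 \<le> real k" "real k \<le> t / s" "t / s < real k + 1"
    unfolding k_def by (simp_all add: le_floor_iff)
  then have "real k * s \<le> t" "t < real k * s + s"
    using \<open>0 < s\<close> by (simp_all add: field_simps)
  have "\<omega> t = \<omega> ((t - real k * s) + real k * s)" by simp
  also have "\<dots> \<le> \<omega> (t - real k * s) + \<omega> (real k * s)"
    using \<open>real k * s \<le> t\<close> \<open>0 < s\<close> assms(4)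
    by (intro modulus_cont_type_subadditive[OF assms(1)]) auto
  also have "\<omega> (t - real k * s) \<le> \<omega> s"
    using \<open>real k * s \<le> t\<close> \<open>t < real k * s + s\<close> assms
    by (intro modulus_cont_type_mono[OF assms(1)]) auto
  also have "\<omega> (real k * s) \<le> real k * \<omega> s"
    using \<open>real k * s \<le> t\<close> assms by (intro modulus_cont_type_mult_le) auto
  finally have "\<omega> t \<le> (real k + 1) * \<omega> s" by (simp add: algebra_simps)
  also have "\<dots> \<le> 2 * (t / s) * \<omega> s"
    using k modulus_cont_type_nonneg[OF assms(1), of s] assms by (intro mult_right_mono) auto
  finally show ?thesis
    using assms by (simp add: divide_simps mult.commute mult.left_commute)
qed

lemma abs_sin_add_nat_pi: "\<bar>sin (x + real m * pi)\<bar> = \<bar>sin x\<bar>"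
proof (induction m)
  case (Suc m)
  have "sin (x + real (Suc m) * pi) = - sin (x + real m * pi)"
    using sin_periodic_pi[of "x + real m * pi"] by (simp add: algebra_simps)
  then show ?case using Suc.IH by simp
qed simp

lemma shifted_integrand_le:
  fixes r m :: nat and \<beta> s t :: real
  assumes "modulus_cont_type \<omega>" "0 < r" "2 * m \<le> r" "0 \<le> s" "s \<le> pi / r"
  defines "t \<equiv> 2 * m * pi / r + s"
  shows "0 \<le> \<omega> t / (t * \<bar>sin (r * t / 2)\<bar> powr \<beta>)"
    and "\<omega> t / (t * \<bar>sin (r * t / 2)\<bar> powr \<beta>) \<le> 2 * (\<omega> s / (s * sin (r * s / 2) powr \<beta>))"
proof -
  have "r * s / 2 \<le> pi / 2" "2 * m * pi / r \<le> pi"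
    using assms(2-5) by (simp_all add: field_simps)
  moreover have "pi / r \<le> pi"
    using assms(2) by (simp add: field_simps)
  ultimately have t: "s \<le> t" "t \<le> 2*pi"
    using assms(4,5) unfolding t_def by auto
  have "0 \<le> r * s / 2"
    using assms(4) by simp
  moreover have "r * s / 2 \<le> pi"
    using \<open>r * s / 2 \<le> pi / 2\<close> pi_gt_zero by linarith
  ultimately have "0 \<le> sin (r * s / 2)"
    by (rule sin_ge_zero)
  have arg: "r * t / 2 = r * s / 2 + real m * pi"
    using assms(2) unfolding t_def by (simp add: field_simps)
  have "\<bar>sin (r * t / 2)\<bar> = \<bar>sin (r * s / 2 + real m * pi)\<bar>"
    unfolding arg ..
  also have "\<dots> = sin (r * s / 2)"
    using \<open>0 \<le> sin (r * s / 2)\<close> by (simp add: abs_sin_add_nat_pi)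
  finally have sin_eq: "\<bar>sin (r * t / 2)\<bar> = sin (r * s / 2)" .
  define P where "P = sin (r * s / 2) powr \<beta>"
  have "0 \<le> P" unfolding P_def by simp
  show "0 \<le> \<omega> t / (t * \<bar>sin (r * t / 2)\<bar> powr \<beta>)"
    using modulus_cont_type_nonneg[OF assms(1), of t] t assms(4) by simp
  show "\<omega> t / (t * \<bar>sin (r * t / 2)\<bar> powr \<beta>) \<le> 2 * (\<omega> s / (s * sin (r * s / 2) powr \<beta>))"
  proof (cases "s = 0")
    case True
    then show ?thesis using sin_eq by simp
  next
    case False
    then have "\<omega> t / t \<le> 2 * (\<omega> s / s)"
      using t assms(4) by (intro modulus_cont_type_quasi_decreasing[OF assms(1)]) auto
    then have "(\<omega> t / t) / P \<le> (2 * (\<omega> s / s)) / P"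
      using \<open>0 \<le> P\<close> by (rule divide_right_mono)
    then show ?thesis unfolding sin_eq P_def[symmetric] by simp
  qed
qed

lemma Lq_norm_on_shifted_le:
  fixes r m :: nat and \<beta> h :: real
  assumes "1 \<le> p" "modulus_cont_type \<omega>" "0 < r" "2 * m \<le> r" "0 \<le> h" "h \<le> pi / r"
  shows "Lq_norm_on p (2 * m * pi / r) (2 * m * pi / r + h) (\<lambda>t. \<omega> t / (t * \<bar>sin (r * t / 2)\<bar> powr \<beta>))
         \<le> ereal 2 * Lq_norm_on p 0 h (\<lambda>t. \<omega> t / (t * sin (r * t / 2) powr \<beta>))"
proof -
  \<comment> \<open>\<omega> is only continuous on \<open>[0, 2\<pi>]\<close>; its continuous extension makes the integrands
    Borel measurable, as the translation lemma requires.\<close>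
  define \<omega>' where "\<omega>' = ext_cont \<omega> 0 (2*pi)"
  have "continuous_on UNIV \<omega>'"
    using assms(2) unfolding \<omega>'_def modulus_cont_type_def by (intro continuous_on_ext_cont) simp
  then have [measurable]: "\<omega>' \<in> borel_measurable borel"
    by (rule borel_measurable_continuous_onI)
  have \<omega>': "\<omega>' x = \<omega> x" if "0 \<le> x" "x \<le> 2*pi" for x
    using that unfolding \<omega>'_def by simp
  have "2 * m * pi / r \<le> pi" "pi / r \<le> pi"
    using assms(3,4) by (simp_all add: field_simps)
  with assms(5,6) have interval: "0 \<le> 2 * m * pi / r" "2 * m * pi / r + h \<le> 2*pi" "h \<le> 2*pi"
    by auto
  have "Lq_norm_on p (2 * m * pi / r) (2 * m * pi / r + h) (\<lambda>t. \<omega> t / (t * \<bar>sin (r * t / 2)\<bar> powr \<beta>))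
      = Lq_norm_on p (2 * m * pi / r) (2 * m * pi / r + h) (\<lambda>t. \<omega>' t / (t * \<bar>sin (r * t / 2)\<bar> powr \<beta>))"
  proof (rule Lq_norm_on_cong)
    fix x assume "2 * m * pi / r \<le> x" "x \<le> 2 * m * pi / r + h"
    then have "0 \<le> x" "x \<le> 2*pi" using interval by linarith+
    then show "\<omega> x / (x * \<bar>sin (r * x / 2)\<bar> powr \<beta>) = \<omega>' x / (x * \<bar>sin (r * x / 2)\<bar> powr \<beta>)"
      by (simp add: \<omega>')
  qed
  also have "\<dots> \<le> ereal 2 * Lq_norm_on p 0 h (\<lambda>t. \<omega>' t / (t * sin (r * t / 2) powr \<beta>))"
  proof (intro Lq_norm_on_translate_le assms(1))
    fix s assume "0 \<le> s" "s \<le> h"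
    then show "0 \<le> \<omega>' (2 * m * pi / r + s) / ((2 * m * pi / r + s) * \<bar>sin (r * (2 * m * pi / r + s) / 2)\<bar> powr \<beta>) \<and>
      \<omega>' (2 * m * pi / r + s) / ((2 * m * pi / r + s) * \<bar>sin (r * (2 * m * pi / r + s) / 2)\<bar> powr \<beta>)
        \<le> 2 * (\<omega>' s / (s * sin (r * s / 2) powr \<beta>))"
      using shifted_integrand_le[OF assms(2-4), of s \<beta>] interval assms(6) by (simp add: \<omega>')
  qed auto
  also have "Lq_norm_on p 0 h (\<lambda>t. \<omega>' t / (t * sin (r * t / 2) powr \<beta>))
      = Lq_norm_on p 0 h (\<lambda>t. \<omega> t / (t * sin (r * t / 2) powr \<beta>))"
  proof (rule Lq_norm_on_cong)
    fix x assume "0 \<le> x" "x \<le> h"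
    then show "\<omega>' x / (x * sin (r * x / 2) powr \<beta>) = \<omega> x / (x * sin (r * x / 2) powr \<beta>)"
      using interval by (simp add: \<omega>')
  qed
  finally show ?thesis .
qed

theorem lemma7:
  fixes p \<beta> :: real and r :: nat and \<omega> :: "real \<Rightarrow> real"
  assumes "1 \<le> p"
    and "r \<ge> 1"
    and "modulus_cont_type \<omega>"
    and "\<exists>C. \<forall>n::nat.
           Lq_norm_on p 0 (pi / (r * (n + 1)))
             (\<lambda>t. \<omega> t / (t * sin (r * t / 2) powr \<beta>))
           \<le> ereal (C * (real n + 1) powr (\<beta> + 1 / p) * \<omega> (pi / (real n + 1)))"
  shows "\<forall>m::nat. m \<le> r div 2 \<longrightarrow>
           (\<exists>C'. \<forall>n::nat.
              Lq_norm_on p (2 * m * pi / r) (2 * m * pi / r + pi / (r * (n + 1)))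
                (\<lambda>t. \<omega> t / (t * \<bar>sin (r * t / 2)\<bar> powr \<beta>))
              \<le> ereal (C' * (real n + 1) powr (\<beta> + 1 / p) * \<omega> (pi / (real n + 1))))"
proof (intro allI impI)
  fix m :: nat assume "m \<le> r div 2"
  then have "2 * m \<le> r" by linarith
  obtain C where C: "\<And>n::nat. Lq_norm_on p 0 (pi / (r * (n + 1))) (\<lambda>t. \<omega> t / (t * sin (r * t / 2) powr \<beta>))
      \<le> ereal (C * (real n + 1) powr (\<beta> + 1 / p) * \<omega> (pi / (real n + 1)))"
    using assms(4) by blast
  have "Lq_norm_on p (2 * m * pi / r) (2 * m * pi / r + pi / (r * (n + 1)))
          (\<lambda>t. \<omega> t / (t * \<bar>sin (r * t / 2)\<bar> powr \<beta>))
        \<le> ereal ((2 * C) * (real n + 1) powr (\<beta> + 1 / p) * \<omega> (pi / (real n + 1)))" for n :: nat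
  proof -
    have "pi / (r * (n + 1)) \<le> pi / r"
      using assms(2) by (intro divide_left_mono mult_pos_pos) (auto intro: add_pos_nonneg)
    then have "Lq_norm_on p (2 * m * pi / r) (2 * m * pi / r + pi / (r * (n + 1)))
          (\<lambda>t. \<omega> t / (t * \<bar>sin (r * t / 2)\<bar> powr \<beta>))
        \<le> ereal 2 * Lq_norm_on p 0 (pi / (r * (n + 1))) (\<lambda>t. \<omega> t / (t * sin (r * t / 2) powr \<beta>))"
      using assms(1-3) \<open>2 * m \<le> r\<close> by (intro Lq_norm_on_shifted_le) auto
    also have "\<dots> \<le> ereal 2 * ereal (C * (real n + 1) powr (\<beta> + 1 / p) * \<omega> (pi / (real n + 1)))"
      using C by (intro ereal_mult_left_mono) auto
    finally show ?thesis by (simp add: mult.assoc)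
  qed
  then show "\<exists>C'. \<forall>n::nat. Lq_norm_on p (2 * m * pi / r) (2 * m * pi / r + pi / (r * (n + 1)))
      (\<lambda>t. \<omega> t / (t * \<bar>sin (r * t / 2)\<bar> powr \<beta>))
      \<le> ereal (C' * (real n + 1) powr (\<beta> + 1 / p) * \<omega> (pi / (real n + 1)))"
    by blast
qed

end
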